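(* Consider the one-period game described in the context, with government price $p_g>\max\{p_0,I\}$. Then in every (perfect Bayesian) equilibrium: (i) a firm of type $\theta$ sells its asset (to the government or to the market), at price $p_g$, if and only if $\theta<p_g+S$; in particular, since $p_g>p_0$, strictly more firms sell and fund their projects than in the laissez-faire outcome (where exactly the types $\theta\le\theta_0$ sell). (ii) If $\mu_m>0$ (the market is active), then $\bar\theta_g<\bar\theta_m$, i.e., on average lower-value assets are sold to the government than to the market.
   Context: Types: a continuum of firms with privately known type $\theta\in[0,1]$, distributed with cdf $F$ and density $f>0$, where $f$ is strictly log-concave. Each firm owns one unit of an asset worth $\theta$ and has a project requiring funding $I>0$ with net return $S>0$; the project can be funded only by selling the asset. A firm that sells at price $p\ge I$ gets payoff $p+S$; a firm that does not sell gets $\theta$. Laissez-faire benchmark: $\theta_0\in(0,1)$ is the unique solution of $\theta_0-S=\mathbb{E}[\theta\mid\theta\le\theta_0]$, and $p_0:=\mathbb{E}[\theta\mid\theta\le\theta_0]$; without intervention exactly the types $\theta\le\theta_0$ sell at price $p_0$. One-period game: the government first announces that it will buy one unit at price $p_g$; then competitive, risk-neutral buyers make price offers (Bertrand competition; buyers break even in expectation; an indifferent buyer buys); then each firm chooses to sell to the government, to sell to the market, or not to sell. Equilibrium means perfect Bayesian equilibrium. Among the types $\theta\le p_g+S$, let $\mu_g$ and $\mu_m=1-\mu_g$ be the fractions selling to the government and to the market, and $\bar\theta_g$, $\bar\theta_m$ the average asset values of those two groups. *)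

theory Defs
  imports "HOL-Analysis.Analysis"
begin

definition cdf :: "(real \<Rightarrow> real) \<Rightarrow> real \<Rightarrow> real" where
  "cdf f x = integral ({0..1} \<inter> {..x}) f"

definition cond_mean :: "(real \<Rightarrow> real) \<Rightarrow> real \<Rightarrow> real" where
  "cond_mean f x = integral ({0..1} \<inter> {..x}) (\<lambda>t. t * f t) / cdf f x"

definition strictly_log_concave_on :: "real set \<Rightarrow> (real \<Rightarrow> real) \<Rightarrow> bool" where
  "strictly_log_concave_on A f \<longleftrightarrow>
     (\<forall>x\<in>A. \<forall>y\<in>A. \<forall>u. x \<noteq> y \<and> 0 < u \<and> u < 1 \<longrightarrow>
        (1 - u) * ln (f x) + u * ln (f y) < ln (f ((1 - u) * x + u * y)))"

text \<open>Payoff of a firm selling at price p: the project is funded iff p >= I.\<close>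
definition sale_payoff :: "real \<Rightarrow> real \<Rightarrow> real \<Rightarrow> real" where
  "sale_payoff I S p = (if I \<le> p then p + S else p)"

text \<open>Equilibrium of the one-period game, given the government price pg.
  pm is the (best) market price offered by the competitive buyers; sg t and sm t
  are the probabilities that type t sells to the government / to the market
  (possibly mixed strategies), 1 - sg t - sm t the probability of not selling.
  Conditions: measurable strategies; sequential rationality of every type;
  buyers break even in expectation at price pm.\<close>
definition equilibrium ::
  "(real \<Rightarrow> real) \<Rightarrow> real \<Rightarrow> real \<Rightarrow> real \<Rightarrow> real \<Rightarrow> (real \<Rightarrow> real) \<Rightarrow> (real \<Rightarrow> real) \<Rightarrow> bool" where
  "equilibrium f I S pg pm sg sm \<longleftrightarrow>
     sg measurable_on {0..1} \<and> sm measurable_on {0..1} \<and>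
     (\<forall>t\<in>{0..1}. 0 \<le> sg t \<and> 0 \<le> sm t \<and> sg t + sm t \<le> 1) \<and>
     (\<forall>t\<in>{0..1}.
        (let best = max (max (sale_payoff I S pg) (sale_payoff I S pm)) t in
          (0 < sg t \<longrightarrow> sale_payoff I S pg = best) \<and>
          (0 < sm t \<longrightarrow> sale_payoff I S pm = best) \<and>
          (sg t + sm t < 1 \<longrightarrow> t = best))) \<and>
     ((\<lambda>t. sm t * (t - pm) * f t) has_integral 0) {0..1}"

definition group_mass :: "(real \<Rightarrow> real) \<Rightarrow> real \<Rightarrow> (real \<Rightarrow> real) \<Rightarrow> real" where
  "group_mass f c s = integral ({0..1} \<inter> {..c}) (\<lambda>t. s t * f t)"

definition group_fraction :: "(real \<Rightarrow> real) \<Rightarrow> real \<Rightarrow> (real \<Rightarrow> real) \<Rightarrow> real" where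
  "group_fraction f c s = group_mass f c s / cdf f c"

definition group_mean :: "(real \<Rightarrow> real) \<Rightarrow> real \<Rightarrow> (real \<Rightarrow> real) \<Rightarrow> real" where
  "group_mean f c s = integral ({0..1} \<inter> {..c}) (\<lambda>t. s t * t * f t) / group_mass f c s"

end

theory Submission
  imports Defs
begin

text \<open>
  By strict log-concavity of the density, the shortfall \<open>c - E[\<theta> | \<theta> \<le> c]\<close> is strictly
  increasing in \<open>c\<close> (compare \<open>f\<close> on \<open>[0, a]\<close> with its translate by \<open>c - a\<close>, whose likelihood
  ratio is monotone). It equals \<open>S\<close> at \<open>\<theta>\<^sub>0\<close>, so for every \<open>c > \<theta>\<^sub>0\<close> a buyer paying
  \<open>c - S\<close> to all types below \<open>c\<close> loses money. A market price above \<open>p\<^sub>g\<close> would attract exactly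
  such a pool, so competitive buyers cannot break even there; hence \<open>p\<^sub>m \<le> p\<^sub>g\<close>, every type below
  \<open>p\<^sub>g + S\<close> sells at \<open>p\<^sub>g\<close>, and this cutoff exceeds \<open>\<theta>\<^sub>0\<close>. An active market breaks even at
  \<open>p\<^sub>g\<close>, so its average type is \<open>p\<^sub>g\<close>, while the average over all sellers is below \<open>p\<^sub>g\<close>:
  the government is left with the lower average.
\<close>

lemma integral_Icc_pos:
  fixes f :: "real \<Rightarrow> real"
  assumes fi: "f integrable_on {a..b}" and ab: "a < b"
    and nonneg: "\<And>x. x \<in> {a..b} \<Longrightarrow> 0 \<le> f x" and pos: "\<And>x. x \<in> {a<..<b} \<Longrightarrow> 0 < f x"
  shows "0 < integral {a..b} f"
proof -
  have ai: "set_integrable lebesgue {a..b} f"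
    using nonnegative_absolutely_integrable_1[OF fi nonneg] by simp
  have "integral {a..b} f \<noteq> 0"
  proof
    assume "integral {a..b} f = 0"
    then have "integral\<^sup>L lebesgue (\<lambda>x. indicator {a..b} x *\<^sub>R f x) = 0"
      using set_lebesgue_integral_eq_integral(2)[OF ai] by (simp add: set_lebesgue_integral_def)
    moreover have "integrable lebesgue (\<lambda>x. indicator {a..b} x *\<^sub>R f x)"
      using ai by (simp add: set_integrable_def)
    ultimately have "AE x in lebesgue. indicator {a..b} x *\<^sub>R f x = 0"
      using integral_nonneg_eq_0_iff_AE[of lebesgue "\<lambda>x. indicator {a..b} x *\<^sub>R f x"] nonneg
      by (auto simp: indicator_def)
    then have "AE x in lebesgue. x \<notin> {a<..<b}"
      by eventually_elim (use pos in \<open>fastforce simp: indicator_def split: if_splits\<close>)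
    then have "emeasure lebesgue {a<..<b} = 0"
      by (subst (asm) AE_iff_measurable[of "{a<..<b}"]) auto
    with ab show False by simp
  qed
  moreover have "0 \<le> integral {a..b} f"
    using integral_nonneg[OF fi nonneg] by simp
  ultimately show ?thesis by simp
qed

lemma integrable_bounded_measurable_mult:
  fixes f g :: "real \<Rightarrow> real"
  assumes f: "f integrable_on S" "\<And>x. x \<in> S \<Longrightarrow> 0 \<le> f x" and S: "S \<in> sets lebesgue"
    and g: "g \<in> borel_measurable (lebesgue_on S)" "\<And>x. x \<in> S \<Longrightarrow> \<bar>g x\<bar> \<le> B"
  shows "(\<lambda>x. g x * f x) integrable_on S"
proof -
  have "f absolutely_integrable_on S"
    using nonnegative_absolutely_integrable_1 f by blast
  moreover have "bounded (g ` S)"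
    using g(2) unfolding bounded_iff by (auto simp: real_norm_def)
  ultimately have "(\<lambda>x. g x * f x) absolutely_integrable_on S"
    using absolutely_integrable_bounded_measurable_product_real g(1) S by blast
  then show ?thesis
    using set_lebesgue_integral_eq_integral(1) by blast
qed

lemma integrable_continuous_mult:
  fixes f g :: "real \<Rightarrow> real"
  assumes "f integrable_on {a..b}" "\<And>x. x \<in> {a..b} \<Longrightarrow> 0 \<le> f x" "continuous_on {a..b} g"
  shows "(\<lambda>x. g x * f x) integrable_on {a..b}"
proof -
  obtain B where "\<forall>x\<in>{a..b}. norm (g x) \<le> B"
    using compact_imp_bounded[OF compact_continuous_image[OF assms(3) compact_Icc]]
    unfolding bounded_iff by auto
  then show ?thesis
    by (intro integrable_bounded_measurable_mult[where B = B] assms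
        continuous_imp_measurable_on_sets_lebesgue) auto
qed

lemma integrable_measurable_weight_moments:
  fixes f w :: "real \<Rightarrow> real"
  assumes f: "f integrable_on {a..b}" "\<And>t. t \<in> {a..b} \<Longrightarrow> 0 \<le> f t"
    and w: "w measurable_on {a..b}" "\<And>t. t \<in> {a..b} \<Longrightarrow> \<bar>w t\<bar> \<le> B"
  shows "(\<lambda>t. w t * f t) integrable_on {a..b}" "(\<lambda>t. w t * t * f t) integrable_on {a..b}"
proof -
  have w_borel: "w \<in> borel_measurable (lebesgue_on {a..b})"
    using w(1) by (simp add: measurable_on_iff_borel_measurable)
  show "(\<lambda>t. w t * f t) integrable_on {a..b}"
    by (rule integrable_bounded_measurable_mult[OF f _ w_borel w(2)]) auto
  have "(\<lambda>t. t) \<in> borel_measurable (lebesgue_on {a..b})"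
    by (rule continuous_imp_measurable_on_sets_lebesgue) (auto intro: continuous_intros)
  then have "(\<lambda>t. w t * t) \<in> borel_measurable (lebesgue_on {a..b})"
    using borel_measurable_times[OF w_borel] by blast
  moreover have "\<bar>w t * t\<bar> \<le> B * (\<bar>a\<bar> + \<bar>b\<bar>)" if "t \<in> {a..b}" for t
  proof -
    have "\<bar>w t\<bar> \<le> B" "\<bar>t\<bar> \<le> \<bar>a\<bar> + \<bar>b\<bar>" using w(2) that by auto
    then show ?thesis by (simp add: abs_mult mult_mono)
  qed
  ultimately show "(\<lambda>t. w t * t * f t) integrable_on {a..b}"
    by (intro integrable_bounded_measurable_mult[OF f]) auto
qed

lemma measurable_on_subinterval:
  fixes g :: "real \<Rightarrow> real"
  assumes "g measurable_on {a..b}" "{c..d} \<subseteq> {a..b}"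
  shows "g measurable_on {c..d}"
  using assms by (simp add: measurable_on_iff_borel_measurable measurable_restrict_mono)

lemma has_integral_Icc_vanishing_above:
  fixes h :: "real \<Rightarrow> real"
  assumes "(h has_integral i) {a..b}" "c \<le> b" "\<And>x. x \<in> {a..b} \<Longrightarrow> c < x \<Longrightarrow> h x = 0"
  shows "(h has_integral i) {a..c}"
proof -
  have "((\<lambda>x. if x \<in> {a..c} then h x else 0) has_integral i) {a..b}"
    by (rule has_integral_spike_eq[OF negligible_empty, THEN iffD1, OF _ assms(1)])
       (use assms(3) in auto)
  then show ?thesis
    unfolding has_integral_restrict_Int using assms(2) by (simp add: Int_absorb2)
qed

lemma integral_weighted_deviation:
  fixes w f :: "real \<Rightarrow> real"
  assumes "(\<lambda>t. w t * f t) integrable_on A" "(\<lambda>t. w t * t * f t) integrable_on A"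
  shows "integral A (\<lambda>t. w t * (t - p) * f t)
       = integral A (\<lambda>t. w t * t * f t) - p * integral A (\<lambda>t. w t * f t)"
proof -
  have "integral A (\<lambda>t. w t * (t - p) * f t) = integral A (\<lambda>t. w t * t * f t - p * (w t * f t))"
    by (simp add: algebra_simps)
  also have "\<dots> = integral A (\<lambda>t. w t * t * f t) - p * integral A (\<lambda>t. w t * f t)"
    using assms by (simp add: integral_diff integrable_on_mult_right)
  finally show ?thesis .
qed

lemma integral_weight_one_below_gt:
  fixes f w :: "real \<Rightarrow> real"
  assumes f: "f integrable_on {0..1}" "\<And>t. t \<in> {0..1} \<Longrightarrow> 0 < f t"
    and w: "(\<lambda>t. w t * f t) integrable_on {0..1}" "\<And>t. t \<in> {0..1} \<Longrightarrow> 0 \<le> w t"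
    and one: "\<And>t. t \<in> {0..1} \<Longrightarrow> t < c \<Longrightarrow> w t = 1"
    and \<theta>c: "0 \<le> \<theta>" "\<theta> < c" "c \<le> 1"
  shows "integral {0..\<theta>} f < integral {0..1} (\<lambda>t. w t * f t)"
proof -
  have f_nonneg: "\<And>t. t \<in> {0..1} \<Longrightarrow> 0 \<le> f t"
    using f(2) less_imp_le by blast
  have fi: "f integrable_on {x..y}" if "0 \<le> x" "y \<le> 1" for x y
    using integrable_on_subinterval[OF f(1)] that by auto
  have wi: "(\<lambda>t. w t * f t) integrable_on {x..y}" if "0 \<le> x" "y \<le> 1" for x y
    using integrable_on_subinterval[OF w(1)] that by auto
  have "integral {0..c} f = integral {0..\<theta>} f + integral {\<theta>..c} f"
    using Henstock_Kurzweil_Integration.integral_combine[of 0 \<theta> c f] \<theta>c fi[of 0 c] by simp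
  moreover have "0 < integral {\<theta>..c} f"
    by (rule integral_Icc_pos) (use \<theta>c fi f f_nonneg in auto)
  moreover have "integral {0..c} f = integral {0..c} (\<lambda>t. w t * f t)"
    by (rule integral_spike[OF negligible_sing[of c]]) (use one \<theta>c in auto)
  moreover have "integral {0..1} (\<lambda>t. w t * f t)
      = integral {0..c} (\<lambda>t. w t * f t) + integral {c..1} (\<lambda>t. w t * f t)"
    using Henstock_Kurzweil_Integration.integral_combine[of 0 c 1 "\<lambda>t. w t * f t"] \<theta>c w(1) by simp
  moreover have "0 \<le> integral {c..1} (\<lambda>t. w t * f t)"
    by (rule integral_nonneg) (use \<theta>c wi w f_nonneg in auto)
  ultimately show ?thesis by linarith
qed

lemma mixture_mean_lt:
  fixes f wg wm :: "real \<Rightarrow> real"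
  assumes f: "f integrable_on {a..b}" "\<And>t. t \<in> {a..b} \<Longrightarrow> 0 \<le> f t"
    and w: "wg measurable_on {a..b}" "wm measurable_on {a..b}"
      "\<And>t. t \<in> {a..b} \<Longrightarrow> 0 \<le> wg t \<and> 0 \<le> wm t \<and> wg t + wm t \<le> 1"
    and split: "\<And>t. t \<in> {a..b} \<Longrightarrow> t < b \<Longrightarrow> wg t + wm t = 1"
    and market: "((\<lambda>t. wm t * (t - p) * f t) has_integral 0) {a..b}"
    and total: "integral {a..b} (\<lambda>t. t * f t) < p * integral {a..b} f"
    and p: "0 < p" and market_active: "0 < integral {a..b} (\<lambda>t. wm t * f t)"
  shows "integral {a..b} (\<lambda>t. wg t * t * f t) / integral {a..b} (\<lambda>t. wg t * f t)
       < integral {a..b} (\<lambda>t. wm t * t * f t) / integral {a..b} (\<lambda>t. wm t * f t)"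
proof -
  have ig: "(\<lambda>t. wg t * f t) integrable_on {a..b}" "(\<lambda>t. wg t * t * f t) integrable_on {a..b}"
    by (rule integrable_measurable_weight_moments[OF f w(1), of 1]; use w(3) in force)+
  have im: "(\<lambda>t. wm t * f t) integrable_on {a..b}" "(\<lambda>t. wm t * t * f t) integrable_on {a..b}"
    by (rule integrable_measurable_weight_moments[OF f w(2), of 1]; use w(3) in force)+
  define Mm Tm Mg Tg where "Mm = integral {a..b} (\<lambda>t. wm t * f t)"
    and "Tm = integral {a..b} (\<lambda>t. wm t * t * f t)" and "Mg = integral {a..b} (\<lambda>t. wg t * f t)"
    and "Tg = integral {a..b} (\<lambda>t. wg t * t * f t)"
  have Tm: "Tm = p * Mm"
    using integral_weighted_deviation[OF im, of p] integral_unique[OF market] by (simp add: Tm_def Mm_def)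
  have complement: "integral {a..b} (\<lambda>t. wg t * h t) = integral {a..b} h - integral {a..b} (\<lambda>t. wm t * h t)"
    if "h integrable_on {a..b}" "(\<lambda>t. wm t * h t) integrable_on {a..b}" for h
  proof -
    have "integral {a..b} (\<lambda>t. wg t * h t) = integral {a..b} (\<lambda>t. h t - wm t * h t)"
    proof (rule integral_spike[OF negligible_sing[of b]])
      fix x assume "x \<in> {a..b} - {b}"
      then have "wg x = 1 - wm x"
        using split[of x] by auto
      then show "h x - wm x * h x = wg x * h x"
        by (simp add: left_diff_distrib)
    qed
    then show ?thesis
      using that by (simp add: integral_diff)
  qed
  have "Mg = integral {a..b} f - Mm"
    using complement[OF f(1)] im(1) by (simp add: Mg_def Mm_def)
  then have "p * integral {a..b} f = p * Mg + p * Mm"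
    by (simp add: right_diff_distrib)
  moreover have "Tg = integral {a..b} (\<lambda>t. t * f t) - Tm"
    using complement[of "\<lambda>t. t * f t"] im(2) ig(2)
      integrable_continuous_mult[OF f, of "\<lambda>t. t"]
    by (simp add: Tg_def Tm_def mult.assoc continuous_on_id)
  ultimately have Tg: "Tg < p * Mg"
    using Tm total by linarith
  have "0 \<le> Mg"
    unfolding Mg_def by (rule integral_nonneg[OF ig(1)]) (use w(3) f(2) in auto)
  then have "Tg / Mg < p"
    using Tg p by (cases "Mg = 0") (auto simp: divide_less_eq)
  then show ?thesis
    using Tm market_active by (simp add: Tg_def Mg_def flip: Tm_def Mm_def)
qed

lemma strictly_log_concave_on_shift_ratio:
  fixes f :: "real \<Rightarrow> real"
  assumes A: "convex A" and lc: "strictly_log_concave_on A f" and pos: "\<And>x. x \<in> A \<Longrightarrow> 0 < f x"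
    and u: "u \<in> A" and vd: "v + d \<in> A" and uv: "u \<le> v" and d: "0 < d"
  shows "f u * f (v + d) \<le> f (u + d) * f v"
proof (cases "u = v")
  case True
  then show ?thesis by (simp add: mult.commute)
next
  case False
  define l where "l = d / (v + d - u)"
  have l: "0 < l" "l < 1" "l * (v + d - u) = d"
    using uv d False by (auto simp: l_def field_simps)
  have comb: "(1 - l) * u + l * (v + d) = u + d" "(1 - (1 - l)) * u + (1 - l) * (v + d) = v"
    using l(3) by (simp_all add: algebra_simps)
  have ud: "u + d \<in> A" and v: "v \<in> A"
    using convexD[OF A u vd, of "1 - l" l] convexD[OF A u vd, of l "1 - l"] l comb
    by (simp_all add: algebra_simps)
  have ne: "u \<noteq> v + d" using uv d by simp
  have slc: "(1 - t) * ln (f u) + t * ln (f (v + d)) < ln (f ((1 - t) * u + t * (v + d)))"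
    if "0 < t" "t < 1" for t
    using lc u vd ne that unfolding strictly_log_concave_on_def by blast
  have "(1 - l) * ln (f u) + l * ln (f (v + d)) < ln (f (u + d))"
    using slc[of l] l comb(1) by simp
  moreover have "(1 - (1 - l)) * ln (f u) + (1 - l) * ln (f (v + d)) < ln (f v)"
    using slc[of "1 - l"] l comb(2) by simp
  ultimately have "ln (f u) + ln (f (v + d)) < ln (f (u + d)) + ln (f v)"
    by (simp add: algebra_simps)
  moreover have fpos: "0 < f u" "0 < f (v + d)" "0 < f (u + d)" "0 < f v"
    using pos u vd ud v by auto
  ultimately have "ln (f u * f (v + d)) < ln (f (u + d) * f v)"
    by (simp add: ln_mult)
  then show ?thesis
    using fpos by (simp add: less_imp_le)
qed

lemma likelihood_ratio_linear_moment_le: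
  fixes f g :: "real \<Rightarrow> real"
  assumes ab: "a < b"
    and f: "f integrable_on {a..b}" "\<And>s. s \<in> {a..b} \<Longrightarrow> 0 < f s"
    and g: "g integrable_on {a..b}" "\<And>s. s \<in> {a..b} \<Longrightarrow> 0 \<le> g s"
    and ratio: "\<And>s t. s \<in> {a..b} \<Longrightarrow> t \<in> {a..b} \<Longrightarrow> s \<le> t \<Longrightarrow> f s * g t \<le> g s * f t"
  shows "integral {a..b} (\<lambda>s. (b - s) * f s) * integral {a..b} g
       \<le> integral {a..b} (\<lambda>s. (b - s) * g s) * integral {a..b} f"
proof -
  have f_nonneg: "\<And>s. s \<in> {a..b} \<Longrightarrow> 0 \<le> f s"
    using f(2) less_imp_le by blast
  have moment: "integral {a..b} (\<lambda>s. (b - s - m) * h s)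
      = integral {a..b} (\<lambda>s. (b - s) * h s) - m * integral {a..b} h"
    if "h integrable_on {a..b}" "\<And>s. s \<in> {a..b} \<Longrightarrow> 0 \<le> h s" for h m
  proof -
    have "integral {a..b} (\<lambda>s. (b - s - m) * h s) = integral {a..b} (\<lambda>s. (b - s) * h s - m * h s)"
      by (simp add: algebra_simps)
    also have "\<dots> = integral {a..b} (\<lambda>s. (b - s) * h s) - integral {a..b} (\<lambda>s. m * h s)"
      by (intro integral_diff integrable_continuous_mult that continuous_intros)
    finally show ?thesis by simp
  qed
  define F where "F = integral {a..b} f"
  define K where "K = integral {a..b} (\<lambda>s. (b - s) * f s)"
  define m where "m = K / F"
  have F: "0 < F"
    unfolding F_def by (rule integral_Icc_pos) (use ab f f_nonneg in auto)
  have "0 \<le> K"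
    unfolding K_def
    by (intro integral_nonneg integrable_continuous_mult f(1) f_nonneg continuous_intros)
       (auto intro!: mult_nonneg_nonneg f_nonneg)
  moreover have "K \<le> (b - a) * F"
    unfolding K_def F_def integral_mult_right[symmetric]
    by (intro integral_le integrable_continuous_mult f(1) f_nonneg continuous_intros mult_right_mono)
       auto
  ultimately have st: "b - m \<in> {a..b}"
    using F by (auto simp: m_def field_simps)
  \<comment> \<open>The weight \<open>b - s - m\<close> has \<open>f\<close>-integral zero and changes sign at \<open>b - m\<close>, where
      \<open>g / f\<close> crosses the level \<open>\<rho>\<close> from above.\<close>
  define \<rho> where "\<rho> = g (b - m) / f (b - m)"
  have pointwise: "\<rho> * ((b - s - m) * f s) \<le> (b - s - m) * g s" if s: "s \<in> {a..b}" for s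
  proof (cases "s \<le> b - m")
    case True
    then have "\<rho> * f s \<le> g s"
      using ratio[OF s st True] f(2)[OF st] by (simp add: \<rho>_def field_simps)
    then have "(b - s - m) * (\<rho> * f s) \<le> (b - s - m) * g s"
      using True by (intro mult_left_mono) auto
    then show ?thesis
      by (simp add: mult.left_commute)
  next
    case False
    then have "g s \<le> \<rho> * f s"
      using ratio[OF st s] f(2)[OF st] by (simp add: \<rho>_def field_simps)
    then have "(b - s - m) * (\<rho> * f s) \<le> (b - s - m) * g s"
      using False by (intro mult_left_mono_neg) auto
    then show ?thesis
      by (simp add: mult.left_commute)
  qed
  have "\<rho> * integral {a..b} (\<lambda>s. (b - s - m) * f s) \<le> integral {a..b} (\<lambda>s. (b - s - m) * g s)"
    unfolding integral_mult_right[symmetric]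
    by (intro integral_le pointwise integrable_on_mult_right
        integrable_continuous_mult[OF f(1) f_nonneg] integrable_continuous_mult[OF g]
        continuous_intros)
  moreover have "integral {a..b} (\<lambda>s. (b - s - m) * f s) = 0"
    using moment[OF f(1) f_nonneg] F by (simp add: m_def K_def F_def)
  ultimately have "m * integral {a..b} g \<le> integral {a..b} (\<lambda>s. (b - s) * g s)"
    using moment[OF g] by simp
  then show ?thesis
    using F by (simp add: m_def K_def F_def field_simps)
qed

lemma truncated_shortfall_strict_mono:
  fixes f :: "real \<Rightarrow> real"
  assumes pos: "\<And>x. x \<in> {0..T} \<Longrightarrow> 0 < f x" and fint: "f integrable_on {0..T}"
    and lc: "strictly_log_concave_on {0..T} f" and ac: "0 < a" "a < c" "c \<le> T"
  shows "integral {0..a} (\<lambda>s. (a - s) * f s) * integral {0..c} f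
       < integral {0..c} (\<lambda>s. (c - s) * f s) * integral {0..a} f"
proof -
  define d where "d = c - a"
  have d: "0 < d" "c = d + a"
    using ac by (auto simp: d_def)
  have nonneg: "\<And>x. x \<in> {0..T} \<Longrightarrow> 0 \<le> f x"
    using pos less_imp_le by blast
  have fi: "f integrable_on {x..y}" if "0 \<le> x" "y \<le> T" for x y
    using integrable_on_subinterval[OF fint] that by auto
  have weighted: "(\<lambda>s. w s * f s) integrable_on {x..y}"
    if "0 \<le> x" "y \<le> T" "continuous_on {x..y} w" for x y w
    using integrable_continuous_mult[OF fi[OF that(1,2)] _ that(3)] nonneg that by auto
  have shift: "integral {d..c} h = integral {0..a} (\<lambda>s. h (s + d))" for h :: "real \<Rightarrow> real"
    using integral_shift_cbox[of d d c h] d by simp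
  have split: "integral {0..c} h = integral {0..d} h + integral {d..c} h"
    if "h integrable_on {0..c}" for h :: "real \<Rightarrow> real"
    using Henstock_Kurzweil_Integration.integral_combine[of 0 d c h] that d ac by simp
  define Fa where "Fa = integral {0..a} f"
  define Ka where "Ka = integral {0..a} (\<lambda>s. (a - s) * f s)"
  define F1 where "F1 = integral {0..d} f"
  define P where "P = integral {0..d} (\<lambda>s. (d - s) * f s)"
  define Fs where "Fs = integral {0..a} (\<lambda>s. f (s + d))"
  define Ks where "Ks = integral {0..a} (\<lambda>s. (a - s) * f (s + d))"
  have Fc: "integral {0..c} f = F1 + Fs"
    using split[OF fi[of 0 c]] shift[of f] ac by (simp add: F1_def Fs_def)
  have "integral {0..d} (\<lambda>s. (c - s) * f s) = integral {0..d} (\<lambda>s. a * f s + (d - s) * f s)"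
    using d(2) by (simp add: algebra_simps)
  also have "\<dots> = a * F1 + P"
    unfolding F1_def P_def
    by (subst integral_add) (use ac d in \<open>auto intro!: weighted fi continuous_intros\<close>)
  finally have "integral {0..d} (\<lambda>s. (c - s) * f s) = a * F1 + P" .
  moreover have "integral {d..c} (\<lambda>s. (c - s) * f s) = Ks"
    unfolding shift Ks_def using d(2) by (simp add: algebra_simps)
  ultimately have Kc: "integral {0..c} (\<lambda>s. (c - s) * f s) = a * F1 + P + Ks"
    using split[of "\<lambda>s. (c - s) * f s"] ac by (simp add: weighted continuous_intros)
  \<comment> \<open>Log-concavity makes \<open>f (s + d) / f s\<close> nonincreasing, so the density shifted by \<open>d\<close>
      puts relatively more weight on small \<open>s\<close> than \<open>f\<close> itself.\<close>
  have mlr: "Ka * Fs \<le> Ks * Fa"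
    unfolding Ka_def Fs_def Ks_def Fa_def
  proof (rule likelihood_ratio_linear_moment_le)
    show "(\<lambda>s. f (s + d)) integrable_on {0..a}"
      using integrable_shift_cbox[of f d c d] fi[of d c] d ac by simp
    show "f s * f (t + d) \<le> f (s + d) * f t" if "s \<in> {0..a}" "t \<in> {0..a}" "s \<le> t" for s t
      by (rule strictly_log_concave_on_shift_ratio[OF _ lc pos]) (use that ac d in auto)
  qed (use ac d pos nonneg fi in auto)
  have "Ka \<le> a * Fa"
    unfolding Ka_def Fa_def integral_mult_right[symmetric]
    by (intro integral_le weighted continuous_intros mult_right_mono) (use ac nonneg in auto)
  moreover have "0 \<le> F1"
    unfolding F1_def by (rule integral_nonneg) (use ac d fi nonneg in auto)
  ultimately have "Ka * F1 \<le> a * Fa * F1"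
    by (rule mult_right_mono)
  then have "Ka * (F1 + Fs) \<le> (a * F1 + Ks) * Fa"
    using mlr by (simp add: algebra_simps)
  moreover have "0 < P * Fa"
    unfolding P_def Fa_def by (intro mult_pos_pos integral_Icc_pos)
      (use ac d fi pos nonneg in \<open>auto intro!: weighted continuous_intros mult_nonneg_nonneg\<close>)
  ultimately have "Ka * (F1 + Fs) < (a * F1 + Ks) * Fa + P * Fa"
    by linarith
  then show ?thesis
    using Fc Kc by (simp add: Ka_def Fa_def algebra_simps)
qed

lemma truncated_mean_lt_of_shortfall_eq:
  fixes f :: "real \<Rightarrow> real"
  assumes pos: "\<And>x. x \<in> {0..T} \<Longrightarrow> 0 < f x" and fint: "f integrable_on {0..T}"
    and lc: "strictly_log_concave_on {0..T} f" and th: "0 < th" "th < c" "c \<le> T"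
    and shortfall: "integral {0..th} (\<lambda>s. s * f s) = (th - S) * integral {0..th} f"
  shows "integral {0..c} (\<lambda>s. s * f s) < (c - S) * integral {0..c} f"
proof -
  have nonneg: "\<And>x. x \<in> {0..T} \<Longrightarrow> 0 \<le> f x"
    using pos less_imp_le by blast
  have fi: "f integrable_on {0..x}" if "x \<le> T" for x
    using integrable_on_subinterval[OF fint] that by auto
  have K: "integral {0..x} (\<lambda>s. (x - s) * f s) = x * integral {0..x} f - integral {0..x} (\<lambda>s. s * f s)"
    if "x \<le> T" for x
  proof -
    have "integral {0..x} (\<lambda>s. (x - s) * f s) = integral {0..x} (\<lambda>s. x * f s - s * f s)"
      by (simp add: algebra_simps)
    also have "\<dots> = integral {0..x} (\<lambda>s. x * f s) - integral {0..x} (\<lambda>s. s * f s)"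
      by (intro integral_diff integrable_continuous_mult[OF fi[OF that]] continuous_intros)
        (use nonneg that in auto)
    finally show ?thesis by simp
  qed
  have "0 < integral {0..th} f"
    by (rule integral_Icc_pos) (use th pos fi nonneg in auto)
  moreover have "integral {0..th} (\<lambda>s. (th - s) * f s) * integral {0..c} f
       < integral {0..c} (\<lambda>s. (c - s) * f s) * integral {0..th} f"
    by (rule truncated_shortfall_strict_mono[OF pos fint lc]) (use th in auto)
  ultimately have "S * integral {0..c} f < integral {0..c} (\<lambda>s. (c - s) * f s)"
    using K[of th] shortfall th by (simp add: algebra_simps)
  then show ?thesis
    using K[of c] th by (simp add: algebra_simps)
qed

lemma equilibrium_best_response:
  assumes "equilibrium f I S pg pm sg sm" "t \<in> {0..1}"
  shows "0 \<le> sg t" "0 \<le> sm t" "sg t + sm t \<le> 1"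
    and "0 < sg t \<Longrightarrow> sale_payoff I S pm \<le> sale_payoff I S pg \<and> t \<le> sale_payoff I S pg"
    and "0 < sm t \<Longrightarrow> sale_payoff I S pg \<le> sale_payoff I S pm \<and> t \<le> sale_payoff I S pm"
    and "sg t + sm t < 1 \<Longrightarrow> sale_payoff I S pg \<le> t \<and> sale_payoff I S pm \<le> t"
proof -
  define best where "best = max (max (sale_payoff I S pg) (sale_payoff I S pm)) t"
  have "0 \<le> sg t \<and> 0 \<le> sm t \<and> sg t + sm t \<le> 1"
    and "(0 < sg t \<longrightarrow> sale_payoff I S pg = best) \<and> (0 < sm t \<longrightarrow> sale_payoff I S pm = best)
      \<and> (sg t + sm t < 1 \<longrightarrow> t = best)"
    using assms unfolding equilibrium_def Let_def best_def by blast+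
  moreover have "sale_payoff I S pg \<le> best" "sale_payoff I S pm \<le> best" "t \<le> best"
    unfolding best_def by auto
  ultimately show "0 \<le> sg t" "0 \<le> sm t" "sg t + sm t \<le> 1"
    and "0 < sg t \<Longrightarrow> sale_payoff I S pm \<le> sale_payoff I S pg \<and> t \<le> sale_payoff I S pg"
    and "0 < sm t \<Longrightarrow> sale_payoff I S pg \<le> sale_payoff I S pm \<and> t \<le> sale_payoff I S pm"
    and "sg t + sm t < 1 \<Longrightarrow> sale_payoff I S pg \<le> t \<and> sale_payoff I S pm \<le> t"
    by auto
qed

lemma equilibrium_break_even_below:
  assumes "equilibrium f I S pg pm sg sm" "c \<le> 1" "\<And>t. t \<in> {0..1} \<Longrightarrow> c < t \<Longrightarrow> sm t = 0"
  shows "((\<lambda>t. sm t * (t - pm) * f t) has_integral 0) {0..c}"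
  by (rule has_integral_Icc_vanishing_above) (use assms in \<open>auto simp: equilibrium_def\<close>)

lemma equilibrium_sale_cutoff:
  assumes eq: "equilibrium f I S pg pm sg sm" and pg: "I < pg" and S: "0 < S"
    and pm: "pm \<le> pg" and t: "t \<in> {0..1}"
  shows "t < pg + S \<Longrightarrow> sg t + sm t = 1"
    and "pg + S < t \<Longrightarrow> sg t = 0 \<and> sm t = 0"
    and "0 < sm t \<Longrightarrow> pm = pg"
proof -
  note br = equilibrium_best_response[OF eq t]
  have payoff_pg: "sale_payoff I S pg = pg + S"
    using pg by (simp add: sale_payoff_def)
  have payoff_pm: "sale_payoff I S pm \<le> pg + S"
    using pm S by (simp add: sale_payoff_def)
  show "t < pg + S \<Longrightarrow> sg t + sm t = 1"
    using br(3,6) payoff_pg by fastforce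
  show "pg + S < t \<Longrightarrow> sg t = 0 \<and> sm t = 0"
    using br(1,2,4,5) payoff_pg payoff_pm by fastforce
  show "0 < sm t \<Longrightarrow> pm = pg"
    using br(5) payoff_pg pm pg S by (auto simp: sale_payoff_def split: if_splits)
qed

lemma equilibrium_market_price_le:
  fixes f :: "real \<Rightarrow> real"
  assumes eq: "equilibrium f I S pg pm sg sm" and pg: "I < pg" and S: "0 < S"
    and f: "f integrable_on {0..1}" "\<And>t. t \<in> {0..1} \<Longrightarrow> 0 \<le> f t"
    and \<theta>0: "0 < \<theta>0" "\<theta>0 < 1" "\<theta>0 < pg + S"
    and pooling: "\<And>c. \<theta>0 < c \<Longrightarrow> c \<le> 1 \<Longrightarrow> integral {0..c} (\<lambda>s. s * f s) < (c - S) * integral {0..c} f"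
  shows "pm \<le> pg"
proof (rule ccontr)
  assume "\<not> pm \<le> pg"
  then have payoff: "sale_payoff I S pg < sale_payoff I S pm" "sale_payoff I S pm = pm + S"
    using pg by (auto simp: sale_payoff_def)
  note br = equilibrium_best_response[OF eq]
  have market_all: "sm t = 1" if "t \<in> {0..1}" "t < pm + S" for t
  proof -
    have "\<not> 0 < sg t" "\<not> sg t + sm t < 1"
      using br(4,6)[OF that(1)] payoff that(2) by auto
    then show ?thesis
      using br(1,3)[OF that(1)] by simp
  qed
  have market_none: "sm t = 0" if "t \<in> {0..1}" "pm + S < t" for t
  proof -
    have "\<not> 0 < sm t"
      using br(5)[OF that(1)] payoff that(2) by auto
    then show ?thesis
      using br(2)[OF that(1)] by simp
  qed
  define c where "c = min 1 (pm + S)"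
  have c: "\<theta>0 < c" "c \<le> 1" "c \<le> pm + S"
    using \<theta>0 \<open>\<not> pm \<le> pg\<close> by (auto simp: c_def)
  have "((\<lambda>t. sm t * (t - pm) * f t) has_integral 0) {0..c}"
    by (rule equilibrium_break_even_below[OF eq c(2)]) (use market_none in \<open>auto simp: c_def\<close>)
  then have "((\<lambda>t. 1 * (t - pm) * f t) has_integral 0) {0..c}"
  proof (rule has_integral_spike[OF negligible_sing[of c], rotated])
    fix t assume "t \<in> {0..c} - {c}"
    then have "sm t = 1"
      using market_all c by auto
    then show "1 * (t - pm) * f t = sm t * (t - pm) * f t"
      by simp
  qed
  moreover have fc: "f integrable_on {0..c}"
    using integrable_on_subinterval[OF f(1)] c by auto
  then have "(\<lambda>t. 1 * f t) integrable_on {0..c}" "(\<lambda>t. 1 * t * f t) integrable_on {0..c}"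
    using integrable_continuous_mult[OF fc, of "\<lambda>t. t"] f(2) c by (auto intro: continuous_intros)
  ultimately have "integral {0..c} (\<lambda>t. t * f t) = pm * integral {0..c} f"
    using integral_weighted_deviation[of "\<lambda>_. 1" f "{0..c}" pm] by (simp add: integral_unique)
  moreover have "(c - S) * integral {0..c} f \<le> pm * integral {0..c} f"
    using c f(2) by (intro mult_right_mono integral_nonneg fc) auto
  ultimately show False
    using pooling[OF c(1,2)] by linarith
qed

lemma equilibrium_adverse_selection:
  fixes f :: "real \<Rightarrow> real"
  assumes eq: "equilibrium f I S pg pm sg sm" and pg: "I < pg" and I: "0 \<le> I" and S: "0 < S"
    and pm: "pm \<le> pg"
    and f: "f integrable_on {0..1}" "\<And>t. t \<in> {0..1} \<Longrightarrow> 0 \<le> f t"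
    and \<theta>0: "\<theta>0 < 1" "\<theta>0 < pg + S"
    and pooling: "\<And>c. \<theta>0 < c \<Longrightarrow> c \<le> 1 \<Longrightarrow> integral {0..c} (\<lambda>s. s * f s) < (c - S) * integral {0..c} f"
    and active: "0 < group_fraction f (pg + S) sm"
  shows "group_mean f (pg + S) sg < group_mean f (pg + S) sm"
proof -
  define c where "c = min 1 (pg + S)"
  have c: "\<theta>0 < c" "c \<le> 1" "c \<le> pg + S"
    using \<theta>0 by (auto simp: c_def)
  have dom: "{0..1} \<inter> {..pg + S} = {0..c}"
    by (auto simp: c_def)
  have fc: "f integrable_on {0..c}"
    using integrable_on_subinterval[OF f(1)] c by auto
  note cutoff = equilibrium_sale_cutoff[OF eq pg S pm]
  note br = equilibrium_best_response[OF eq]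
  have "0 \<le> cdf f (pg + S)"
    unfolding cdf_def dom using c f(2) by (intro integral_nonneg fc) auto
  then have market_active: "0 < integral {0..c} (\<lambda>t. sm t * f t)"
    using active unfolding group_fraction_def group_mass_def dom by (simp add: zero_less_divide_iff)
  have "\<exists>t\<in>{0..c}. 0 < sm t"
  proof (rule ccontr)
    assume "\<not> (\<exists>t\<in>{0..c}. 0 < sm t)"
    then have "integral {0..c} (\<lambda>t. sm t * f t) = integral {0..c} (\<lambda>t. 0)"
      using br(2) c by (intro integral_cong) (force simp: not_less)
    with market_active show False
      by simp
  qed
  then have "pm = pg"
    using cutoff(3) c by force
  moreover have "((\<lambda>t. sm t * (t - pm) * f t) has_integral 0) {0..c}"
    by (rule equilibrium_break_even_below[OF eq c(2)]) (use cutoff(2) in \<open>auto simp: c_def\<close>)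
  ultimately have market: "((\<lambda>t. sm t * (t - pg) * f t) has_integral 0) {0..c}"
    by simp
  have "(c - S) * integral {0..c} f \<le> pg * integral {0..c} f"
    using c f(2) by (intro mult_right_mono integral_nonneg fc) auto
  then have total: "integral {0..c} (\<lambda>t. t * f t) < pg * integral {0..c} f"
    using pooling[OF c(1,2)] by linarith
  show ?thesis
    unfolding group_mean_def group_mass_def dom
  proof (rule mixture_mean_lt[OF fc _ _ _ _ _ market total _ market_active])
    show "sg measurable_on {0..c}" "sm measurable_on {0..c}"
      using eq c by (auto simp: equilibrium_def intro: measurable_on_subinterval)
    show "0 \<le> sg x \<and> 0 \<le> sm x \<and> sg x + sm x \<le> 1" if "x \<in> {0..c}" for x
      using br(1-3)[of x] that c by auto
    show "sg x + sm x = 1" if "x \<in> {0..c}" "x < c" for x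
      using cutoff(1)[of x] that c by auto
  qed (use f c pg I in auto)
qed

lemma pooling_loss_above_laissez_faire_cutoff:
  fixes f :: "real \<Rightarrow> real"
  assumes f_pos: "\<forall>t\<in>{0..1}. 0 < f t" and fint: "f integrable_on {0..1}"
    and lc: "strictly_log_concave_on {0..1} f"
    and \<theta>0: "0 < \<theta>0" "\<theta>0 < 1" "\<theta>0 - S = cond_mean f \<theta>0"
    and c: "\<theta>0 < c" "c \<le> 1"
  shows "integral {0..c} (\<lambda>s. s * f s) < (c - S) * integral {0..c} f"
proof -
  have dom: "{0..1} \<inter> {..\<theta>0} = {0..\<theta>0}"
    using \<theta>0 by auto
  have "0 < integral {0..\<theta>0} f"
    using \<theta>0 f_pos integrable_on_subinterval[OF fint, of 0 \<theta>0]
    by (intro integral_Icc_pos) (auto intro: less_imp_le)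
  then have "integral {0..\<theta>0} (\<lambda>s. s * f s) = (\<theta>0 - S) * integral {0..\<theta>0} f"
    using \<theta>0(3) unfolding cond_mean_def cdf_def dom by (simp add: field_simps)
  then show ?thesis
    using truncated_mean_lt_of_shortfall_eq[OF _ fint lc \<theta>0(1) c] f_pos by blast
qed

lemma equilibrium_sales_exceed_laissez_faire:
  fixes f :: "real \<Rightarrow> real"
  assumes eq: "equilibrium f I S pg pm sg sm" and pg: "I < pg" and S: "0 < S" and pm: "pm \<le> pg"
    and f_pos: "\<forall>t\<in>{0..1}. 0 < f t" and fint: "f integrable_on {0..1}"
    and \<theta>0: "0 < \<theta>0" "\<theta>0 < 1" "\<theta>0 < pg + S"
  shows "cdf f \<theta>0 < integral {0..1} (\<lambda>t. (sg t + sm t) * f t)"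
proof -
  have dom: "{0..1} \<inter> {..\<theta>0} = {0..\<theta>0}"
    using \<theta>0 by auto
  note br = equilibrium_best_response[OF eq]
  have "(\<lambda>t. (sg t + sm t) * f t) integrable_on {0..1}"
    using eq br f_pos
    by (intro integrable_measurable_weight_moments(1)[OF fint, of _ 1] measurable_on_add)
       (auto simp: equilibrium_def less_imp_le)
  then show ?thesis
    unfolding cdf_def dom using br equilibrium_sale_cutoff(1)[OF eq pg S pm] \<theta>0
    by (intro integral_weight_one_below_gt[OF fint f_pos[rule_format], where c = "min 1 (pg + S)"])
       auto
qed

theorem theorem1:
  fixes f :: "real \<Rightarrow> real" and I S \<theta>0 pg pm :: real
    and sg sm :: "real \<Rightarrow> real"
  assumes f_pos: "\<forall>t\<in>{0..1}. 0 < f t"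
    and f_density: "(f has_integral 1) {0..1}"
    and f_logconc: "strictly_log_concave_on {0..1} f"
    and I_pos: "0 < I" and S_pos: "0 < S"
    and \<theta>0_range: "0 < \<theta>0" "\<theta>0 < 1"
    and \<theta>0_eq: "\<theta>0 - S = cond_mean f \<theta>0"
    and \<theta>0_unique: "\<forall>t\<in>{0<..<1}. t - S = cond_mean f t \<longrightarrow> t = \<theta>0"
    and pg_gt: "pg > max (cond_mean f \<theta>0) I"
    and eq: "equilibrium f I S pg pm sg sm"
  shows "(\<forall>t\<in>{0..1}. t < pg + S \<longrightarrow> sg t + sm t = 1 \<and> (0 < sm t \<longrightarrow> pm = pg))
       \<and> (\<forall>t\<in>{0..1}. pg + S < t \<longrightarrow> sg t = 0 \<and> sm t = 0)
       \<and> integral {0..1} (\<lambda>t. (sg t + sm t) * f t) > cdf f \<theta>0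
       \<and> (group_fraction f (pg + S) sm > 0 \<longrightarrow>
            group_mean f (pg + S) sg < group_mean f (pg + S) sm)"
proof -
  have fint: "f integrable_on {0..1}"
    using f_density by blast
  have f_nonneg: "\<And>t. t \<in> {0..1} \<Longrightarrow> 0 \<le> f t"
    using f_pos less_imp_le by blast
  note pooling = pooling_loss_above_laissez_faire_cutoff[OF f_pos fint f_logconc \<theta>0_range \<theta>0_eq]
  have pg: "I < pg" "\<theta>0 < pg + S"
    using pg_gt \<theta>0_eq by auto
  have pm: "pm \<le> pg"
    by (rule equilibrium_market_price_le[OF eq pg(1) S_pos fint f_nonneg \<theta>0_range pg(2) pooling])
  note cutoff = equilibrium_sale_cutoff[OF eq pg(1) S_pos pm]
  have "cdf f \<theta>0 < integral {0..1} (\<lambda>t. (sg t + sm t) * f t)"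
    by (rule equilibrium_sales_exceed_laissez_faire[OF eq pg(1) S_pos pm f_pos fint \<theta>0_range pg(2)])
  moreover have "group_fraction f (pg + S) sm > 0 \<longrightarrow>
      group_mean f (pg + S) sg < group_mean f (pg + S) sm"
    using equilibrium_adverse_selection[OF eq pg(1) _ S_pos pm fint f_nonneg \<theta>0_range(2) pg(2) pooling]
      I_pos by auto
  ultimately show ?thesis
    using cutoff by auto
qed

end
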